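(* For $\zeta\in[a,\tau)$ define $$D(\zeta)=\left[\frac{1}{\epsilon}\Lambda\left(e^{\epsilon(\omega-\tau)}-1\right)-\frac{1-\tau_2}{\epsilon-\widetilde{\epsilon}}\,\frac{1-e^{-r(\omega-\tau)}}{ra_\tau}\left(1-e^{(\widetilde{\epsilon}-\epsilon)(\tau-\zeta)}\right)\right]e^{\epsilon(\tau-\zeta)}$$ (this is $\widetilde{M_1}(\zeta)-\widetilde{M_2}(\zeta)$), and let $$\Lambda_{EP}=\frac{\epsilon(1-\tau_2)\left(1-e^{-r(\omega-\tau)}\right)\left(e^{(\widetilde{\epsilon}-\epsilon)(\tau-a)}-1\right)}{ra_\tau\left(e^{\epsilon(\omega-\tau)}-1\right)(\widetilde{\epsilon}-\epsilon)}.$$ If $\Lambda\le\Lambda_{EP}$, then there exists a critical age $\widetilde{\zeta}\in[a,\tau)$ such that $D(\zeta)<0$ for $a\le\zeta<\widetilde{\zeta}$, $D(\widetilde{\zeta})=0$, and $D(\zeta)>0$ for $\widetilde{\zeta}<\zeta<\tau$ (younger participants prefer EET to PAYGO, older ones prefer PAYGO, age $\widetilde\zeta$ is indifferent). If $\Lambda>\Lambda_{EP}$, then $D(\zeta)>0$ for all $\zeta\in[a,\tau)$ (all these participants prefer PAYGO to EET).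
   Context: Parameters: $r>0$, $\mu>r$, $\sigma>0$, real $\gamma,\xi,\alpha,\beta$; $\nu=(\mu-r)/\sigma$, $\epsilon=\gamma-r-\xi\nu\neq0$, $\widetilde{\epsilon}=\alpha-r-\beta\nu\neq\epsilon$. Ages $a<\tau<\omega$; post-retirement tax rate $\tau_2\in[0,1)$. With survival function $s(x)=e^{-A_m(x-a)-\frac{B_m}{\ln c}(c^x-c^a)}$ (Makeham constants $A_m,B_m,c$) and population growth rate $\rho$: $\Lambda=\frac{\int_a^\tau e^{-(\rho+A_m)(u-a)-\frac{B_m}{\ln c}(c^u-c^a)}du}{\int_\tau^\omega e^{-(\rho+A_m)(u-a)-\frac{B_m}{\ln c}(c^u-c^a)}du}>0$, and $a_\tau=\int_0^\infty e^{-(r+A_m)t-\frac{B_m}{\ln c}c^\tau(c^t-1)}dt\in(0,\infty)$ (annuity factor). Interpretation: $\zeta$ is a participant's age at the decision time, and the sign of $D(\zeta)$ determines whether that participant's utility gains more from the PAYGO contribution rate ($D>0$) or the EET contribution rate ($D<0$). *)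

theory Defs
  imports "HOL-Analysis.Analysis"
begin

definition nu :: "real \<Rightarrow> real \<Rightarrow> real \<Rightarrow> real" where
  "nu r \<mu> \<sigma> = (\<mu> - r) / \<sigma>"

definition eps :: "real \<Rightarrow> real \<Rightarrow> real \<Rightarrow> real \<Rightarrow> real \<Rightarrow> real" where
  "eps r \<mu> \<sigma> \<gamma> \<xi> = \<gamma> - r - \<xi> * nu r \<mu> \<sigma>"

definition eps_tilde :: "real \<Rightarrow> real \<Rightarrow> real \<Rightarrow> real \<Rightarrow> real \<Rightarrow> real" where
  "eps_tilde r \<mu> \<sigma> \<alpha> \<beta> = \<alpha> - r - \<beta> * nu r \<mu> \<sigma>"

text \<open>Integrand of the population-weighted survival (Makeham law).\<close>
definition pop_weight :: "real \<Rightarrow> real \<Rightarrow> real \<Rightarrow> real \<Rightarrow> real \<Rightarrow> real \<Rightarrow> real" where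
  "pop_weight \<rho> Am Bm c a u =
     exp (- (\<rho> + Am) * (u - a) - Bm / ln c * (c powr u - c powr a))"

definition Lambda :: "real \<Rightarrow> real \<Rightarrow> real \<Rightarrow> real \<Rightarrow> real \<Rightarrow> real \<Rightarrow> real \<Rightarrow> real" where
  "Lambda \<rho> Am Bm c a \<tau> \<omega> =
     integral {a..\<tau>} (pop_weight \<rho> Am Bm c a) / integral {\<tau>..\<omega>} (pop_weight \<rho> Am Bm c a)"

definition annuity_integrand :: "real \<Rightarrow> real \<Rightarrow> real \<Rightarrow> real \<Rightarrow> real \<Rightarrow> real \<Rightarrow> real" where
  "annuity_integrand r Am Bm c \<tau> t =
     exp (- (r + Am) * t - Bm / ln c * c powr \<tau> * (c powr t - 1))"

definition annuity :: "real \<Rightarrow> real \<Rightarrow> real \<Rightarrow> real \<Rightarrow> real \<Rightarrow> real" where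
  "annuity r Am Bm c \<tau> = integral {0..} (annuity_integrand r Am Bm c \<tau>)"

definition Dfun :: "real \<Rightarrow> real \<Rightarrow> real \<Rightarrow> real \<Rightarrow> real \<Rightarrow> real \<Rightarrow> real \<Rightarrow> real \<Rightarrow> real \<Rightarrow> real" where
  "Dfun e et L aT r \<tau>2 \<tau> \<omega> \<zeta> =
     (1 / e * L * (exp (e * (\<omega> - \<tau>)) - 1)
      - (1 - \<tau>2) / (e - et) * ((1 - exp (- r * (\<omega> - \<tau>))) / (r * aT))
          * (1 - exp ((et - e) * (\<tau> - \<zeta>))))
     * exp (e * (\<tau> - \<zeta>))"

definition Lambda_EP :: "real \<Rightarrow> real \<Rightarrow> real \<Rightarrow> real \<Rightarrow> real \<Rightarrow> real \<Rightarrow> real \<Rightarrow> real \<Rightarrow> real" where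
  "Lambda_EP e et aT r \<tau>2 a \<tau> \<omega> =
     e * (1 - \<tau>2) * (1 - exp (- r * (\<omega> - \<tau>))) * (exp ((et - e) * (\<tau> - a)) - 1)
     / (r * aT * (exp (e * (\<omega> - \<tau>)) - 1) * (et - e))"

end

theory Submission
  imports Defs
begin

text \<open>Up to the positive factor \<open>exp (e * (\<tau> - \<zeta>))\<close>, \<open>D \<zeta>\<close> equals
  \<open>L * exp_accum e (\<omega> - \<tau>) - K * exp_accum (et - e) (\<tau> - \<zeta>)\<close> with \<open>K > 0\<close>. As
  \<open>exp_accum d\<close> is strictly increasing and vanishes at \<open>0\<close>, this bracket is continuous and
  strictly increasing in \<open>\<zeta>\<close> and positive at \<open>\<zeta> = \<tau>\<close>, so it either has a unique zero in
  \<open>[a, \<tau>)\<close> or is positive on all of \<open>[a, \<tau>]\<close>, according to its sign at \<open>\<zeta> = a\<close>. That sign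
  is the comparison of \<open>L\<close> with \<open>Lambda_EP = K * exp_accum (et - e) (\<tau> - a) / exp_accum e (\<omega> - \<tau>)\<close>.
  Only the signs of the data enter.\<close>

text \<open>For \<open>d \<noteq> 0\<close> this is \<open>\<integral>\<^sub>0\<^sup>s exp (d * u) du\<close>.\<close>
definition exp_accum :: "real \<Rightarrow> real \<Rightarrow> real" where
  "exp_accum d s = (exp (d * s) - 1) / d"

lemma exp_accum_zero [simp]: "exp_accum d 0 = 0"
  by (simp add: exp_accum_def)

lemma exp_accum_has_real_derivative:
  assumes "d \<noteq> 0"
  shows "(exp_accum d has_real_derivative exp (d * s)) (at s)"
  unfolding exp_accum_def using assms
  by (auto intro!: derivative_eq_intros)

lemma strict_mono_exp_accum:
  assumes "d \<noteq> 0"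
  shows "strict_mono (exp_accum d)"
proof (rule strict_monoI)
  fix s t :: real
  assume "s < t"
  then show "exp_accum d s < exp_accum d t"
    by (rule DERIV_pos_imp_increasing) (use exp_accum_has_real_derivative[OF assms] exp_gt_zero in blast)
qed

lemma exp_accum_pos:
  assumes "d \<noteq> 0" and "0 < s"
  shows "0 < exp_accum d s"
  using strict_monoD[OF strict_mono_exp_accum[OF assms(1)] assms(2)] by simp

lemma continuous_on_exp_accum: "continuous_on S (exp_accum d)"
  unfolding exp_accum_def by (cases "d = 0") (simp_all add: continuous_intros)

lemma Dfun_eq:
  "Dfun e et L aT r \<tau>2 \<tau> \<omega> \<zeta> =
     (L * exp_accum e (\<omega> - \<tau>)
      - (1 - \<tau>2) * ((1 - exp (- r * (\<omega> - \<tau>))) / (r * aT)) * exp_accum (et - e) (\<tau> - \<zeta>))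
     * exp (e * (\<tau> - \<zeta>))"
proof -
  have "(1 - x) / (e - et) = (x - 1) / (et - e)" for x
    by (metis minus_diff_eq minus_divide_divide)
  then show ?thesis
    unfolding Dfun_def exp_accum_def by (simp add: field_simps)
qed

lemma Lambda_EP_eq:
  "Lambda_EP e et aT r \<tau>2 a \<tau> \<omega> =
     (1 - \<tau>2) * ((1 - exp (- r * (\<omega> - \<tau>))) / (r * aT)) * exp_accum (et - e) (\<tau> - a)
     / exp_accum e (\<omega> - \<tau>)"
  unfolding Lambda_EP_def exp_accum_def by (simp add: field_simps)

lemma continuous_strict_mono_on_crossing:
  fixes g :: "real \<Rightarrow> real"
  assumes "a \<le> b" and "continuous_on {a..b} g" and "strict_mono_on {a..b} g"
    and "g a \<le> 0" and "0 < g b"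
  shows "\<exists>c. a \<le> c \<and> c < b \<and> (\<forall>x. a \<le> x \<and> x < c \<longrightarrow> g x < 0) \<and> g c = 0
             \<and> (\<forall>x. c < x \<and> x \<le> b \<longrightarrow> 0 < g x)"
proof -
  obtain c where c: "a \<le> c" "c \<le> b" "g c = 0"
    using IVT'[of g a 0 b] assms by auto
  with assms(5) have "c < b"
    using order.not_eq_order_implies_strict by fastforce
  moreover have "g x < 0" if "a \<le> x" "x < c" for x
    using strict_mono_onD[OF assms(3), of x c] that c by simp
  moreover have "0 < g x" if "c < x" "x \<le> b" for x
    using strict_mono_onD[OF assms(3), of c x] that c by simp
  ultimately show ?thesis
    using c by blast
qed

theorem theorem3p2:
  fixes r \<mu> \<sigma> \<gamma> \<xi> \<alpha> \<beta> \<rho> Am Bm c a \<tau> \<omega> \<tau>2 :: real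
  defines "e \<equiv> eps r \<mu> \<sigma> \<gamma> \<xi>"
      and "et \<equiv> eps_tilde r \<mu> \<sigma> \<alpha> \<beta>"
      and "L \<equiv> Lambda \<rho> Am Bm c a \<tau> \<omega>"
      and "aT \<equiv> annuity r Am Bm c \<tau>"
  defines "D \<equiv> Dfun e et L aT r \<tau>2 \<tau> \<omega>"
      and "LEP \<equiv> Lambda_EP e et aT r \<tau>2 a \<tau> \<omega>"
  assumes "0 < r" and "r < \<mu>" and "0 < \<sigma>"
      and "e \<noteq> 0" and "et \<noteq> e"
      and "a < \<tau>" and "\<tau> < \<omega>"
      and "0 \<le> \<tau>2" and "\<tau>2 < 1"
      and "0 < c" and "c \<noteq> 1"
      and "0 < L"
      and "annuity_integrand r Am Bm c \<tau> integrable_on {0..}" and "0 < aT"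
  shows "(L \<le> LEP \<longrightarrow>
            (\<exists>\<zeta>c. a \<le> \<zeta>c \<and> \<zeta>c < \<tau> \<and>
                 (\<forall>\<zeta>. a \<le> \<zeta> \<and> \<zeta> < \<zeta>c \<longrightarrow> D \<zeta> < 0) \<and>
                 D \<zeta>c = 0 \<and>
                 (\<forall>\<zeta>. \<zeta>c < \<zeta> \<and> \<zeta> < \<tau> \<longrightarrow> 0 < D \<zeta>)))
       \<and> (LEP < L \<longrightarrow> (\<forall>\<zeta>. a \<le> \<zeta> \<and> \<zeta> < \<tau> \<longrightarrow> 0 < D \<zeta>))"
proof -
  define A where "A = exp_accum e (\<omega> - \<tau>)"
  define K where "K = (1 - \<tau>2) * ((1 - exp (- r * (\<omega> - \<tau>))) / (r * aT))"
  define g where "g \<zeta> = L * A - K * exp_accum (et - e) (\<tau> - \<zeta>)" for \<zeta>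
  have "0 < A"
    unfolding A_def using assms by (simp add: exp_accum_pos)
  have "0 < K"
    unfolding K_def using assms by (simp add: mult_pos_pos)
  have sign_D: "D \<zeta> < 0 \<longleftrightarrow> g \<zeta> < 0" "D \<zeta> = 0 \<longleftrightarrow> g \<zeta> = 0" "0 < D \<zeta> \<longleftrightarrow> 0 < g \<zeta>" for \<zeta>
    unfolding D_def Dfun_eq g_def A_def K_def
    by (simp_all add: mult_less_0_iff zero_less_mult_iff)
  have LEP_eq: "LEP = K * exp_accum (et - e) (\<tau> - a) / A"
    unfolding LEP_def Lambda_EP_eq A_def K_def ..
  have g_mono: "strict_mono_on {a..\<tau>} g"
    using strict_monoD[OF strict_mono_exp_accum[of "et - e"]] \<open>0 < K\<close> \<open>et \<noteq> e\<close>
    by (auto simp: g_def strict_mono_on_def)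
  have g_cont: "continuous_on {a..\<tau>} g"
    unfolding g_def by (intro continuous_intros continuous_on_compose2[OF continuous_on_exp_accum]) auto
  have "0 < g \<tau>"
    unfolding g_def using \<open>0 < A\<close> \<open>0 < L\<close> by simp
  show ?thesis
  proof (intro conjI impI)
    assume "L \<le> LEP"
    then have "g a \<le> 0"
      unfolding LEP_eq g_def by (simp add: pos_le_divide_eq \<open>0 < A\<close>)
    then obtain \<zeta>c where "a \<le> \<zeta>c" "\<zeta>c < \<tau>" "g \<zeta>c = 0"
        "\<forall>\<zeta>. a \<le> \<zeta> \<and> \<zeta> < \<zeta>c \<longrightarrow> g \<zeta> < 0" "\<forall>\<zeta>. \<zeta>c < \<zeta> \<and> \<zeta> \<le> \<tau> \<longrightarrow> 0 < g \<zeta>"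
      using continuous_strict_mono_on_crossing[OF _ g_cont g_mono] \<open>a < \<tau>\<close> \<open>0 < g \<tau>\<close> by auto
    then show "\<exists>\<zeta>c. a \<le> \<zeta>c \<and> \<zeta>c < \<tau> \<and> (\<forall>\<zeta>. a \<le> \<zeta> \<and> \<zeta> < \<zeta>c \<longrightarrow> D \<zeta> < 0) \<and> D \<zeta>c = 0
                \<and> (\<forall>\<zeta>. \<zeta>c < \<zeta> \<and> \<zeta> < \<tau> \<longrightarrow> 0 < D \<zeta>)"
      unfolding sign_D by (intro exI[of _ \<zeta>c]) auto
  next
    assume "LEP < L"
    then have "0 < g a"
      unfolding LEP_eq g_def by (simp add: pos_divide_less_eq \<open>0 < A\<close>)
    then have "0 < g \<zeta>" if "a \<le> \<zeta>" "\<zeta> < \<tau>" for \<zeta>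
      using strict_mono_onD[OF g_mono, of a \<zeta>] that by (cases "\<zeta> = a") auto
    then show "\<forall>\<zeta>. a \<le> \<zeta> \<and> \<zeta> < \<tau> \<longrightarrow> 0 < D \<zeta>"
      unfolding sign_D by blast
  qed
qed

end
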